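(* Let $(E,\le,\mathrm{Con})$ be a prime event structure and $\mathcal A$ its family of configurations. If $(R,\le_R),\rho$ is an extremal realisation of $\mathcal A$, then $\rho:R\to E$ is injective, its image $\rho R$ is a configuration of $E$, and for all $r,r'\in R$, $r\le_R r'$ iff $\rho(r)\le\rho(r')$.
   Context: A (prime) event structure $(E,\le,\mathrm{Con})$: set $E$, partial order $\le$ with $\{e'\mid e'\le e\}$ finite for all $e$, a nonempty family $\mathrm{Con}$ of finite subsets closed under subsets, containing all singletons, and such that $X\in\mathrm{Con}$ and $e\le e'\in X$ imply $X\cup\{e\}\in\mathrm{Con}$. A configuration is a (possibly infinite) down-closed subset all of whose finite subsets are in $\mathrm{Con}$. A (causal) realisation of a family $\mathcal A$ with $A=\bigcup\mathcal A$ is a partial order $(R,\le_R)$ with finite down-sets and a function $\rho:R\to A$ such that $\rho x\in\mathcal A$ for every down-closed $x\subseteq R$. A map of realisations is a partial surjective function between carriers which sends down-closed subsets to down-closed subsets and commutes with the functions to $A$ where defined; it is total if the function is total. A realisation is extremal if every total map of realisations out of it is an isomorphism of realisations. *)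

theory Defs
  imports Main
begin

definition prime_event_structure ::
  "'e set \<Rightarrow> ('e \<Rightarrow> 'e \<Rightarrow> bool) \<Rightarrow> 'e set set \<Rightarrow> bool" where
  "prime_event_structure E le Con \<longleftrightarrow>
     (\<forall>e\<in>E. le e e) \<and>
     (\<forall>e\<in>E. \<forall>e'\<in>E. le e e' \<and> le e' e \<longrightarrow> e = e') \<and>
     (\<forall>e\<in>E. \<forall>e'\<in>E. \<forall>e''\<in>E. le e e' \<and> le e' e'' \<longrightarrow> le e e'') \<and>
     (\<forall>e\<in>E. finite {e'\<in>E. le e' e}) \<and>
     Con \<noteq> {} \<and>
     (\<forall>X\<in>Con. finite X \<and> X \<subseteq> E) \<and>
     (\<forall>X\<in>Con. \<forall>Y. Y \<subseteq> X \<longrightarrow> Y \<in> Con) \<and>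
     (\<forall>e\<in>E. {e} \<in> Con) \<and>
     (\<forall>X\<in>Con. \<forall>e\<in>E. \<forall>e'\<in>X. le e e' \<longrightarrow> insert e X \<in> Con)"

definition configurations ::
  "'e set \<Rightarrow> ('e \<Rightarrow> 'e \<Rightarrow> bool) \<Rightarrow> 'e set set \<Rightarrow> 'e set set" where
  "configurations E le Con =
     {x. x \<subseteq> E \<and> (\<forall>e\<in>x. \<forall>e'\<in>E. le e' e \<longrightarrow> e' \<in> x)
         \<and> (\<forall>X. finite X \<and> X \<subseteq> x \<longrightarrow> X \<in> Con)}"

definition partial_order_fin_down :: "'r set \<Rightarrow> ('r \<Rightarrow> 'r \<Rightarrow> bool) \<Rightarrow> bool" where
  "partial_order_fin_down R le \<longleftrightarrow>
     (\<forall>r\<in>R. le r r) \<and>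
     (\<forall>r\<in>R. \<forall>r'\<in>R. le r r' \<and> le r' r \<longrightarrow> r = r') \<and>
     (\<forall>r\<in>R. \<forall>r'\<in>R. \<forall>r''\<in>R. le r r' \<and> le r' r'' \<longrightarrow> le r r'') \<and>
     (\<forall>r\<in>R. finite {r'\<in>R. le r' r})"

definition down_closed :: "'r set \<Rightarrow> ('r \<Rightarrow> 'r \<Rightarrow> bool) \<Rightarrow> 'r set \<Rightarrow> bool" where
  "down_closed R le x \<longleftrightarrow> x \<subseteq> R \<and> (\<forall>r\<in>x. \<forall>r'\<in>R. le r' r \<longrightarrow> r' \<in> x)"

definition realisation ::
  "'a set set \<Rightarrow> 'r set \<Rightarrow> ('r \<Rightarrow> 'r \<Rightarrow> bool) \<Rightarrow> ('r \<Rightarrow> 'a) \<Rightarrow> bool" where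
  "realisation A R le rho \<longleftrightarrow>
     partial_order_fin_down R le \<and>
     rho ` R \<subseteq> \<Union>A \<and>
     (\<forall>x. down_closed R le x \<longrightarrow> rho ` x \<in> A)"

definition pimage :: "('r \<rightharpoonup> 's) \<Rightarrow> 'r set \<Rightarrow> 's set" where
  "pimage f x = {s. \<exists>r\<in>x. f r = Some s}"

definition real_map ::
  "'r set \<Rightarrow> ('r \<Rightarrow> 'r \<Rightarrow> bool) \<Rightarrow> ('r \<Rightarrow> 'a) \<Rightarrow>
   's set \<Rightarrow> ('s \<Rightarrow> 's \<Rightarrow> bool) \<Rightarrow> ('s \<Rightarrow> 'a) \<Rightarrow> ('r \<rightharpoonup> 's) \<Rightarrow> bool" where
  "real_map R leR rho S leS sigma f \<longleftrightarrow>
     dom f \<subseteq> R \<and> ran f = S \<and>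
     (\<forall>x. down_closed R leR x \<longrightarrow> down_closed S leS (pimage f x)) \<and>
     (\<forall>r s. f r = Some s \<longrightarrow> sigma s = rho r)"

definition total_real_map ::
  "'r set \<Rightarrow> ('r \<Rightarrow> 'r \<Rightarrow> bool) \<Rightarrow> ('r \<Rightarrow> 'a) \<Rightarrow>
   's set \<Rightarrow> ('s \<Rightarrow> 's \<Rightarrow> bool) \<Rightarrow> ('s \<Rightarrow> 'a) \<Rightarrow> ('r \<rightharpoonup> 's) \<Rightarrow> bool" where
  "total_real_map R leR rho S leS sigma f \<longleftrightarrow>
     real_map R leR rho S leS sigma f \<and> dom f = R"

definition real_iso ::
  "'r set \<Rightarrow> ('r \<Rightarrow> 'r \<Rightarrow> bool) \<Rightarrow> ('r \<Rightarrow> 'a) \<Rightarrow>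
   's set \<Rightarrow> ('s \<Rightarrow> 's \<Rightarrow> bool) \<Rightarrow> ('s \<Rightarrow> 'a) \<Rightarrow> ('r \<rightharpoonup> 's) \<Rightarrow> bool" where
  "real_iso R leR rho S leS sigma f \<longleftrightarrow>
     real_map R leR rho S leS sigma f \<and>
     (\<exists>g. real_map S leS sigma R leR rho g \<and>
          (\<forall>r\<in>R. (g \<circ>\<^sub>m f) r = Some r) \<and>
          (\<forall>s\<in>S. (f \<circ>\<^sub>m g) s = Some s))"

text \<open>Target realisations are taken with carrier in the same type as
  the source; since total maps are surjective, every target is isomorphic to one of
  this form.\<close>
definition extremal ::
  "'a set set \<Rightarrow> 'r set \<Rightarrow> ('r \<Rightarrow> 'r \<Rightarrow> bool) \<Rightarrow> ('r \<Rightarrow> 'a) \<Rightarrow> bool" where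
  "extremal A R le rho \<longleftrightarrow>
     realisation A R le rho \<and>
     (\<forall>(S::'r set) leS sigma f.
        realisation A S leS sigma \<and> total_real_map R le rho S leS sigma f \<longrightarrow>
        real_iso R le rho S leS sigma f)"

end

theory Submission
  imports Defs
begin

text \<open>Choose one preimage under \<open>\<rho>\<close> for every event of the configuration \<open>\<rho> R\<close> and order
  these representatives as their images are ordered in \<open>E\<close>.  This is again a realisation, and
  sending each element of \<open>R\<close> to the representative of its image is a total map of realisations.
  By extremality it is an isomorphism, so \<open>\<rho>\<close> is injective and the map is the identity.  Its
  inverse, and \<open>\<rho>\<close> itself, then show that the \<open>\<le>\<^sub>R\<close>-down-closed subsets of \<open>R\<close> are exactly the
  subsets down-closed for the order pulled back from \<open>E\<close>, and two orders with the same
  down-closed sets coincide.\<close>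

lemma prime_event_structure_refl:
  "prime_event_structure E le Con \<Longrightarrow> e \<in> E \<Longrightarrow> le e e"
  unfolding prime_event_structure_def by (elim conjE) blast

lemma prime_event_structure_antisym:
  "prime_event_structure E le Con \<Longrightarrow> e \<in> E \<Longrightarrow> e' \<in> E \<Longrightarrow> le e e' \<Longrightarrow> le e' e \<Longrightarrow> e = e'"
  unfolding prime_event_structure_def by (elim conjE) blast

lemma prime_event_structure_trans:
  "prime_event_structure E le Con \<Longrightarrow> e \<in> E \<Longrightarrow> e' \<in> E \<Longrightarrow> e'' \<in> E \<Longrightarrow>
    le e e' \<Longrightarrow> le e' e'' \<Longrightarrow> le e e''"
  unfolding prime_event_structure_def by (elim conjE) blast

lemma prime_event_structure_finite_down:
  "prime_event_structure E le Con \<Longrightarrow> e \<in> E \<Longrightarrow> finite {e'\<in>E. le e' e}"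
  unfolding prime_event_structure_def by (elim conjE) blast

lemma configurations_subset: "x \<in> configurations E le Con \<Longrightarrow> x \<subseteq> E"
  unfolding configurations_def by blast

lemma configurations_down:
  "x \<in> configurations E le Con \<Longrightarrow> e \<in> x \<Longrightarrow> e' \<in> E \<Longrightarrow> le e' e \<Longrightarrow> e' \<in> x"
  unfolding configurations_def by blast

lemma configurations_Con:
  "x \<in> configurations E le Con \<Longrightarrow> finite X \<Longrightarrow> X \<subseteq> x \<Longrightarrow> X \<in> Con"
  unfolding configurations_def by blast

lemma realisation_image_carrier: "realisation A R le rho \<Longrightarrow> rho ` R \<in> A"
  unfolding realisation_def down_closed_def by blast

lemma realisation_image_configuration_subset:
  "realisation (configurations E le Con) R leR rho \<Longrightarrow> rho ` R \<subseteq> E"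
  using realisation_image_carrier configurations_subset by blast

lemma down_closed_subset: "down_closed R le x \<Longrightarrow> x \<subseteq> R"
  by (simp add: down_closed_def)

lemma realisation_refl: "realisation A R le rho \<Longrightarrow> \<forall>a\<in>R. le a a"
  unfolding realisation_def partial_order_fin_down_def by (elim conjE)

lemma realisation_trans:
  "realisation A R le rho \<Longrightarrow> \<forall>a\<in>R. \<forall>b\<in>R. \<forall>c\<in>R. le a b \<and> le b c \<longrightarrow> le a c"
  unfolding realisation_def partial_order_fin_down_def by (elim conjE)

lemma extremal_realisation: "extremal A R le rho \<Longrightarrow> realisation A R le rho"
  by (simp add: extremal_def)

lemma extremal_real_iso:
  fixes R S :: "'r set"
  assumes "extremal A R le rho" "realisation A S leS sigma" "total_real_map R le rho S leS sigma f"
  shows "real_iso R le rho S leS sigma f"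
  using assms unfolding extremal_def by blast

lemma down_closed_downset:
  assumes "\<forall>a\<in>R. \<forall>b\<in>R. \<forall>c\<in>R. le a b \<and> le b c \<longrightarrow> le a c" and "a \<in> R"
  shows "down_closed R le {b\<in>R. le b a}"
  using assms unfolding down_closed_def by blast

lemma order_reflected_by_down_closed:
  assumes down_closed_le': "\<And>x. down_closed R le' x \<Longrightarrow> down_closed R le x"
    and refl: "\<forall>a\<in>R. le' a a"
    and trans: "\<forall>a\<in>R. \<forall>b\<in>R. \<forall>c\<in>R. le' a b \<and> le' b c \<longrightarrow> le' a c"
    and "r \<in> R" "r' \<in> R" "le r r'"
  shows "le' r r'"
proof -
  have "down_closed R le {b\<in>R. le' b r'}"
    using down_closed_le' down_closed_downset[OF trans \<open>r' \<in> R\<close>] by blast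
  moreover have "r' \<in> {b\<in>R. le' b r'}" using refl \<open>r' \<in> R\<close> by blast
  ultimately show ?thesis using assms(4-6) unfolding down_closed_def by blast
qed

definition pullback_order :: "('r \<Rightarrow> 'e) \<Rightarrow> ('e \<Rightarrow> 'e \<Rightarrow> bool) \<Rightarrow> 'r \<Rightarrow> 'r \<Rightarrow> bool" where
  "pullback_order rho le a b \<longleftrightarrow> le (rho a) (rho b)"

lemma pullback_order_refl:
  assumes "prime_event_structure E le Con" and "rho ` S \<subseteq> E"
  shows "\<forall>a\<in>S. pullback_order rho le a a"
  unfolding pullback_order_def using prime_event_structure_refl[OF assms(1)] assms(2) by blast

lemma pullback_order_trans:
  assumes "prime_event_structure E le Con" and "rho ` S \<subseteq> E"
  shows "\<forall>a\<in>S. \<forall>b\<in>S. \<forall>c\<in>S. pullback_order rho le a b \<and> pullback_order rho le b c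
      \<longrightarrow> pullback_order rho le a c"
  unfolding pullback_order_def using prime_event_structure_trans[OF assms(1)] assms(2) by blast

lemma partial_order_fin_down_pullback:
  assumes pes: "prime_event_structure E le Con" and E: "rho ` S \<subseteq> E" and inj: "inj_on rho S"
  shows "partial_order_fin_down S (pullback_order rho le)"
  unfolding partial_order_fin_down_def
proof (intro conjI)
  show "\<forall>a\<in>S. pullback_order rho le a a"
    using pullback_order_refl[OF pes E] .
  show "\<forall>a\<in>S. \<forall>b\<in>S. \<forall>c\<in>S. pullback_order rho le a b \<and> pullback_order rho le b c
      \<longrightarrow> pullback_order rho le a c"
    using pullback_order_trans[OF pes E] .
  show "\<forall>a\<in>S. \<forall>b\<in>S. pullback_order rho le a b \<and> pullback_order rho le b a \<longrightarrow> a = b"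
    using E inj prime_event_structure_antisym[OF pes] unfolding pullback_order_def inj_on_def
    by blast
  show "\<forall>a\<in>S. finite {b\<in>S. pullback_order rho le b a}"
  proof
    fix a assume "a \<in> S"
    have "rho ` {b\<in>S. pullback_order rho le b a} \<subseteq> {e\<in>E. le e (rho a)}"
      using E unfolding pullback_order_def by blast
    then have "finite (rho ` {b\<in>S. pullback_order rho le b a})"
      by (rule finite_subset) (use prime_event_structure_finite_down[OF pes] E \<open>a \<in> S\<close> in blast)
    moreover have "inj_on rho {b\<in>S. pullback_order rho le b a}"
      using inj by (rule inj_on_subset) blast
    ultimately show "finite {b\<in>S. pullback_order rho le b a}"
      by (rule finite_imageD)
  qed
qed

lemma realisation_pullback:
  assumes pes: "prime_event_structure E le Con"
    and conf: "rho ` S \<in> configurations E le Con" and inj: "inj_on rho S"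
  shows "realisation (configurations E le Con) S (pullback_order rho le) rho"
  unfolding realisation_def
proof (intro conjI allI impI)
  show "partial_order_fin_down S (pullback_order rho le)"
    using partial_order_fin_down_pullback[OF pes configurations_subset[OF conf] inj] .
  show "rho ` S \<subseteq> \<Union> (configurations E le Con)" using conf by blast
  fix x assume x: "down_closed S (pullback_order rho le) x"
  then have "x \<subseteq> S" by (rule down_closed_subset)
  show "rho ` x \<in> configurations E le Con"
    unfolding configurations_def
  proof (intro CollectI conjI allI impI ballI)
    show "rho ` x \<subseteq> E" using \<open>x \<subseteq> S\<close> configurations_subset[OF conf] by blast
    fix e e' assume "e \<in> rho ` x" "e' \<in> E" "le e' e"
    then obtain a where "a \<in> x" "e = rho a" by blast
    then obtain b where "b \<in> S" "e' = rho b"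
      using configurations_down[OF conf] \<open>x \<subseteq> S\<close> \<open>e' \<in> E\<close> \<open>le e' e\<close> by blast
    then have "b \<in> x"
      using x \<open>a \<in> x\<close> \<open>e = rho a\<close> \<open>le e' e\<close> unfolding down_closed_def pullback_order_def by blast
    then show "e' \<in> rho ` x" using \<open>e' = rho b\<close> by blast
  next
    fix X assume "finite X \<and> X \<subseteq> rho ` x"
    moreover have "rho ` x \<subseteq> rho ` S" using \<open>x \<subseteq> S\<close> by (rule image_mono)
    ultimately show "X \<in> Con" using configurations_Con[OF conf] by (meson subset_trans)
  qed
qed

definition section_map :: "'r set \<Rightarrow> ('r \<Rightarrow> 'e) \<Rightarrow> 'r \<rightharpoonup> 'r" where
  "section_map R rho r = (if r \<in> R then Some (inv_into R rho (rho r)) else None)"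

lemma representative_label:
  "a \<in> inv_into R rho ` rho ` x \<Longrightarrow> x \<subseteq> R \<Longrightarrow> rho a \<in> rho ` x"
  by (auto simp: f_inv_into_f)

lemma representative_of_label:
  assumes "b \<in> inv_into R rho ` rho ` R"
  shows "inv_into R rho (rho b) = b"
proof -
  obtain c where "c \<in> R" "b = inv_into R rho (rho c)" using assms by blast
  then have "rho b = rho c" by (simp add: f_inv_into_f)
  then show ?thesis using \<open>b = inv_into R rho (rho c)\<close> by simp
qed

lemma inj_on_representatives: "inj_on rho (inv_into R rho ` rho ` R)"
  by (metis inj_onI representative_of_label)

lemma pimage_section_map: "x \<subseteq> R \<Longrightarrow> pimage (section_map R rho) x = inv_into R rho ` rho ` x"
  unfolding pimage_def section_map_def by auto

lemma down_closed_representatives: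
  assumes real: "realisation (configurations E le Con) R leR rho"
    and x: "down_closed R leR x"
  shows "down_closed (inv_into R rho ` rho ` R) (pullback_order rho le) (inv_into R rho ` rho ` x)"
  unfolding down_closed_def
proof (intro conjI ballI impI)
  have "x \<subseteq> R" using x by (rule down_closed_subset)
  then show "inv_into R rho ` rho ` x \<subseteq> inv_into R rho ` rho ` R" by blast
  have conf: "rho ` x \<in> configurations E le Con"
    using real x unfolding realisation_def by blast
  fix a b
  assume a: "a \<in> inv_into R rho ` rho ` x" and b: "b \<in> inv_into R rho ` rho ` R"
    and "pullback_order rho le b a"
  have "rho b \<in> E"
    using representative_label[OF b] realisation_image_configuration_subset[OF real] by blast
  then have "rho b \<in> rho ` x"
    using configurations_down[OF conf representative_label[OF a \<open>x \<subseteq> R\<close>]]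
      \<open>pullback_order rho le b a\<close> unfolding pullback_order_def by blast
  then show "b \<in> inv_into R rho ` rho ` x"
    using representative_of_label[OF b] by (metis image_eqI)
qed

lemma total_real_map_section_map:
  assumes real: "realisation (configurations E le Con) R leR rho"
  shows "total_real_map R leR rho (inv_into R rho ` rho ` R) (pullback_order rho le) rho
    (section_map R rho)"
  unfolding total_real_map_def real_map_def
proof (intro conjI allI impI)
  show "dom (section_map R rho) \<subseteq> R" "dom (section_map R rho) = R"
    unfolding section_map_def dom_def by auto
  show "ran (section_map R rho) = inv_into R rho ` rho ` R"
    unfolding section_map_def ran_def by auto
  show "rho s = rho r" if "section_map R rho r = Some s" for r s
    using that unfolding section_map_def by (auto simp: f_inv_into_f split: if_splits)
  fix x assume x: "down_closed R leR x"
  then have "x \<subseteq> R" by (rule down_closed_subset)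
  then show "down_closed (inv_into R rho ` rho ` R) (pullback_order rho le)
      (pimage (section_map R rho) x)"
    using down_closed_representatives[OF real x] pimage_section_map by metis
qed

lemma down_closed_pullback_if_injective:
  assumes "realisation (configurations E le Con) R leR rho" "inj_on rho R" "down_closed R leR x"
  shows "down_closed R (pullback_order rho le) x"
  using down_closed_representatives[OF assms(1,3)]
    inv_into_image_cancel[OF assms(2) down_closed_subset[OF assms(3)]]
    inv_into_image_cancel[OF assms(2) subset_refl]
  by simp

lemma realisation_reflects_order:
  assumes real: "realisation (configurations E le Con) R leR rho" and inj: "inj_on rho R"
    and "r \<in> R" "r' \<in> R" "le (rho r) (rho r')"
  shows "leR r r'"
proof (rule order_reflected_by_down_closed[of R leR "pullback_order rho le",
      OF _ realisation_refl[OF real] realisation_trans[OF real] assms(3,4)])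
  show "down_closed R (pullback_order rho le) x" if "down_closed R leR x" for x
    using down_closed_pullback_if_injective[OF real inj that] .
  show "pullback_order rho le r r'" using assms(5) by (simp add: pullback_order_def)
qed

lemma real_map_down_closed:
  "real_map R leR rho S leS sigma f \<Longrightarrow> down_closed R leR x \<Longrightarrow> down_closed S leS (pimage f x)"
  by (simp add: real_map_def)

lemma real_iso_injective:
  assumes "real_iso R leR rho S leS sigma f" "r \<in> R" "r' \<in> R" "f r = f r'"
  shows "r = r'"
proof -
  obtain g where gf: "\<forall>r\<in>R. (g \<circ>\<^sub>m f) r = Some r"
    using assms(1) unfolding real_iso_def by blast
  have "(g \<circ>\<^sub>m f) r = (g \<circ>\<^sub>m f) r'" by (simp add: map_comp_def assms(4))
  then show ?thesis using gf assms(2,3) by simp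
qed

lemma real_iso_identity_down_closed:
  assumes iso: "real_iso R leR rho R leS sigma f" and id: "\<forall>r\<in>R. f r = Some r"
    and x: "down_closed R leS x"
  shows "down_closed R leR x"
proof -
  obtain g where g: "real_map R leS sigma R leR rho g" and gf: "\<forall>r\<in>R. (g \<circ>\<^sub>m f) r = Some r"
    using iso unfolding real_iso_def by blast
  have "x \<subseteq> R" using x by (rule down_closed_subset)
  moreover have "\<forall>r\<in>R. g r = Some r" using gf id by (simp add: map_comp_def)
  ultimately have "pimage g x = x" unfolding pimage_def by auto
  then show ?thesis using real_map_down_closed[OF g x] by simp
qed

theorem mainTheorem5:
  fixes E :: "'e set" and le :: "'e \<Rightarrow> 'e \<Rightarrow> bool" and Con :: "'e set set"
    and R :: "'r set" and leR :: "'r \<Rightarrow> 'r \<Rightarrow> bool" and rho :: "'r \<Rightarrow> 'e"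
  assumes "prime_event_structure E le Con"
    and "extremal (configurations E le Con) R leR rho"
  shows "inj_on rho R \<and> rho ` R \<in> configurations E le Con \<and>
         (\<forall>r\<in>R. \<forall>r'\<in>R. leR r r' \<longleftrightarrow> le (rho r) (rho r'))"
proof -
  let ?S = "inv_into R rho ` rho ` R"
  have real: "realisation (configurations E le Con) R leR rho"
    using extremal_realisation[OF assms(2)] .
  have conf: "rho ` R \<in> configurations E le Con" using realisation_image_carrier[OF real] .
  then have "rho ` ?S \<in> configurations E le Con"
    by (simp only: image_inv_into_cancel[OF refl subset_refl])
  then have "realisation (configurations E le Con) ?S (pullback_order rho le) rho"
    using realisation_pullback[OF assms(1) _ inj_on_representatives] by blast
  then have iso: "real_iso R leR rho ?S (pullback_order rho le) rho (section_map R rho)"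
    by (rule extremal_real_iso[OF assms(2) _ total_real_map_section_map[OF real]])
  have inj: "inj_on rho R"
    by (rule inj_onI, rule real_iso_injective[OF iso]) (simp_all add: section_map_def)
  have iso_id: "real_iso R leR rho R (pullback_order rho le) rho (section_map R rho)"
    using iso inj by simp
  have id: "\<forall>r\<in>R. section_map R rho r = Some r" using inj by (simp add: section_map_def)
  have labels: "rho ` R \<subseteq> E" using configurations_subset[OF conf] .
  have "pullback_order rho le r r'" if "r \<in> R" "r' \<in> R" "leR r r'" for r r'
  proof (rule order_reflected_by_down_closed[of R "pullback_order rho le" leR,
        OF _ pullback_order_refl[OF assms(1) labels] pullback_order_trans[OF assms(1) labels] that])
    show "down_closed R leR x" if "down_closed R (pullback_order rho le) x" for x
      using real_iso_identity_down_closed[OF iso_id id that] .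
  qed
  then show ?thesis
    using inj conf realisation_reflects_order[OF real inj] unfolding pullback_order_def by blast
qed

end
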